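(* Let $T=(T_1,\dots,T_m)$ be a commuting $m$-tuple of bounded operators on a Hilbert space $\mathcal H$. Then the joint approximate point spectrum $\sigma_{ap}(T)$ is disjoint from the open ball $\mathbb B_{m_\infty(T)}=\{\lambda\in\mathbb C^m:\|\lambda\|_2<m_\infty(T)\}$, where $$m_\infty(T)=\sup_{k\ge1}\ \inf_{h\in\mathcal H,\ \|h\|=1}\big\|Q_T^k(I)h\big\|^{1/(2k)},\qquad Q_T^k(I)=\sum_{|\alpha|=k}\frac{k!}{\alpha!}\,T^{*\alpha}T^\alpha.$$
   Context: For $\alpha\in\mathbb N^m$, $|\alpha|=\sum\alpha_i$, $\alpha!=\prod\alpha_i!$, $T^\alpha=T_1^{\alpha_1}\cdots T_m^{\alpha_m}$ and $T^{*\alpha}=(T^\alpha)^*$. The joint approximate point spectrum $\sigma_{ap}(T)$ is the set of $\lambda\in\mathbb C^m$ for which there are unit vectors $h_n$ with $\sum_j\|(T_j-\lambda_j)h_n\|\to0$. *)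

theory Defs
  imports "HOL-Analysis.Analysis"
begin

class chilbert = real_normed_vector + complete_space +
  fixes scaleC :: "complex \<Rightarrow> 'a \<Rightarrow> 'a" (infixr "*\<^sub>C" 75)
    and cinner :: "'a \<Rightarrow> 'a \<Rightarrow> complex"
  assumes scaleC_add_right: "a *\<^sub>C (x + y) = a *\<^sub>C x + a *\<^sub>C y"
    and scaleC_add_left: "(a + b) *\<^sub>C x = a *\<^sub>C x + b *\<^sub>C x"
    and scaleC_scaleC: "a *\<^sub>C (b *\<^sub>C x) = (a * b) *\<^sub>C x"
    and scaleC_one: "1 *\<^sub>C x = x"
    and scaleR_scaleC: "scaleR r x = complex_of_real r *\<^sub>C x"
    and cinner_conj: "cinner x y = cnj (cinner y x)"
    and cinner_add_right: "cinner x (y + z) = cinner x y + cinner x z"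
    and cinner_scaleC_right: "cinner x (a *\<^sub>C y) = a * cinner x y"
    and cinner_self_norm: "cinner x x = complex_of_real ((norm x)\<^sup>2)"

instantiation complex :: chilbert
begin
definition scaleC_complex :: "complex \<Rightarrow> complex \<Rightarrow> complex" where
  "scaleC_complex a x = a * x"
definition cinner_complex :: "complex \<Rightarrow> complex \<Rightarrow> complex" where
  "cinner_complex x y = cnj x * y"
instance
proof
  fix a b :: complex and x y z :: complex and r :: real
  show "a *\<^sub>C (x + y) = a *\<^sub>C x + a *\<^sub>C y"
    by (simp add: scaleC_complex_def distrib_left)
  show "(a + b) *\<^sub>C x = a *\<^sub>C x + b *\<^sub>C x"
    by (simp add: scaleC_complex_def distrib_right)
  show "a *\<^sub>C (b *\<^sub>C x) = (a * b) *\<^sub>C x"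
    by (simp add: scaleC_complex_def mult.assoc)
  show "1 *\<^sub>C x = x" by (simp add: scaleC_complex_def)
  show "scaleR r x = complex_of_real r *\<^sub>C x"
    by (simp add: scaleC_complex_def scaleR_conv_of_real)
  show "cinner x y = cnj (cinner y x)" by (simp add: cinner_complex_def mult.commute)
  show "cinner x (y + z) = cinner x y + cinner x z"
    by (simp add: cinner_complex_def distrib_left)
  show "cinner x (a *\<^sub>C y) = a * cinner x y"
    by (simp add: cinner_complex_def scaleC_complex_def mult.left_commute)
  show "cinner x x = complex_of_real ((norm x)\<^sup>2)"
    unfolding cinner_complex_def complex_norm_square by (rule mult.commute)
qed
end

definition bounded_clinear :: "('a::chilbert \<Rightarrow> 'a) \<Rightarrow> bool" where
  "bounded_clinear A \<longleftrightarrow> bounded_linear A \<and> (\<forall>c x. A (c *\<^sub>C x) = c *\<^sub>C A x)"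

definition cadjoint :: "('a::chilbert \<Rightarrow> 'a) \<Rightarrow> ('a \<Rightarrow> 'a)" where
  "cadjoint A = (THE B. \<forall>x y. cinner (B x) y = cinner x (A y))"

definition multi_indices :: "nat \<Rightarrow> nat \<Rightarrow> (nat \<Rightarrow> nat) set" where
  "multi_indices m k = {\<alpha>. (\<forall>i\<ge>m. \<alpha> i = 0) \<and> (\<Sum>i<m. \<alpha> i) = k}"

definition Tpow :: "nat \<Rightarrow> (nat \<Rightarrow> 'a \<Rightarrow> 'a) \<Rightarrow> (nat \<Rightarrow> nat) \<Rightarrow> 'a \<Rightarrow> 'a" where
  "Tpow m T \<alpha> = foldr (\<lambda>i f. (T i ^^ \<alpha> i) \<circ> f) [0..<m] id"

definition QTk :: "nat \<Rightarrow> (nat \<Rightarrow> 'a::chilbert \<Rightarrow> 'a) \<Rightarrow> nat \<Rightarrow> 'a \<Rightarrow> 'a" where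
  "QTk m T k h = (\<Sum>\<alpha>\<in>multi_indices m k.
      (fact k / (\<Prod>i<m. fact (\<alpha> i)) :: real) *\<^sub>R cadjoint (Tpow m T \<alpha>) (Tpow m T \<alpha> h))"

definition m_infty :: "nat \<Rightarrow> (nat \<Rightarrow> 'a::chilbert \<Rightarrow> 'a) \<Rightarrow> real" where
  "m_infty m T = (SUP k\<in>{1..}. INF h\<in>{h. norm h = 1}.
      norm (QTk m T k h) powr (1 / (2 * real k)))"

definition cvec :: "nat \<Rightarrow> (nat \<Rightarrow> complex) set" where
  "cvec m = {z. \<forall>i\<ge>m. z i = 0}"

definition l2norm :: "nat \<Rightarrow> (nat \<Rightarrow> complex) \<Rightarrow> real" where
  "l2norm m z = sqrt (\<Sum>i<m. (cmod (z i))\<^sup>2)"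

definition joint_ap_spectrum :: "nat \<Rightarrow> (nat \<Rightarrow> 'a::chilbert \<Rightarrow> 'a) \<Rightarrow> (nat \<Rightarrow> complex) set" where
  "joint_ap_spectrum m T = {z\<in>cvec m. \<exists>h :: nat \<Rightarrow> 'a. (\<forall>n. norm (h n) = 1) \<and>
      (\<lambda>n. \<Sum>j<m. norm (T j (h n) - z j *\<^sub>C h n)) \<longlonglongrightarrow> 0}"

end

theory Submission
  imports Defs
begin

text \<open>If \<open>z \<in> \<sigma>\<^sub>a\<^sub>p(T)\<close> with unit approximate eigenvectors \<open>h\<^sub>n\<close>, then
  \<open>T\<^sup>\<alpha> h\<^sub>n - z\<^sup>\<alpha> h\<^sub>n \<rightarrow> 0\<close> for every multi-index \<open>\<alpha>\<close>. Hence for the positive operator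
  \<open>Q = Q\<^sub>T\<^sup>k(I)\<close> the quadratic form \<open>\<langle>h\<^sub>n, Q h\<^sub>n\<rangle> = \<Sum>\<^sub>\<alpha> (k!/\<alpha>!) \<parallel>T\<^sup>\<alpha> h\<^sub>n\<parallel>\<^sup>2\<close> tends to
  \<open>\<Sum>\<^sub>\<alpha> (k!/\<alpha>!) \<bar>z\<^sup>\<alpha>\<bar>\<^sup>2 = \<parallel>z\<parallel>\<^sup>2\<^sup>k\<close> by the multinomial theorem, so the bottom \<open>c\<close> of the
  numerical range of \<open>Q\<close> is at most \<open>\<parallel>z\<parallel>\<^sup>2\<^sup>k\<close>. For a positive operator \<open>c\<close> is an approximate
  eigenvalue, so \<open>\<parallel>Q h\<parallel>\<close> gets arbitrarily close to \<open>c\<close> on the unit sphere; taking \<open>2k\<close>-th roots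
  and the supremum over \<open>k\<close> gives \<open>m\<^sub>\<infinity>(T) \<le> \<parallel>z\<parallel>\<close>.

  Since \<open>cadjoint\<close> is a definite description, its defining property rests on the Riesz
  representation theorem, proved here from the point of minimal norm on the hyperplane
  \<open>\<phi> = 1\<close>.\<close>

lemma cinner_add_left: "cinner (x + y) z = cinner x z + cinner y (z::'a::chilbert)"
  by (metis cinner_add_right cinner_conj complex_cnj_add)

lemma cinner_scaleC_left: "cinner (a *\<^sub>C x) (y::'a::chilbert) = cnj a * cinner x y"
  by (metis cinner_conj cinner_scaleC_right complex_cnj_mult)

lemma cinner_scaleR_right: "cinner x (r *\<^sub>R (y::'a::chilbert)) = of_real r * cinner x y"
  by (simp add: scaleR_scaleC cinner_scaleC_right)

lemma cinner_scaleR_left: "cinner (r *\<^sub>R x) (y::'a::chilbert) = of_real r * cinner x y"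
  by (simp add: scaleR_scaleC cinner_scaleC_left)

lemma cinner_minus_right: "cinner x (- y) = - cinner x (y::'a::chilbert)"
  using cinner_scaleR_right[of x "-1" y] by simp

lemma cinner_minus_left: "cinner (- x) y = - cinner x (y::'a::chilbert)"
  using cinner_scaleR_left[of "-1" x y] by simp

lemma cinner_diff_right: "cinner x (y - z) = cinner x y - cinner x (z::'a::chilbert)"
  by (simp only: diff_conv_add_uminus cinner_add_right cinner_minus_right)

lemma cinner_diff_left: "cinner (x - y) z = cinner x z - cinner y (z::'a::chilbert)"
  by (simp only: diff_conv_add_uminus cinner_add_left cinner_minus_left)

lemma cinner_zero_right [simp]: "cinner x (0::'a::chilbert) = 0"
  using cinner_scaleR_right[of x 0 0] by simp

lemma cinner_zero_left [simp]: "cinner (0::'a::chilbert) y = 0"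
  using cinner_scaleR_left[of 0 0 y] by simp

lemma cinner_sum_right: "cinner x (sum f A) = (\<Sum>a\<in>A. cinner x (f a::'a::chilbert))"
  by (induct A rule: infinite_finite_induct) (auto simp: cinner_add_right)

lemma cinner_sum_left: "cinner (sum f A) y = (\<Sum>a\<in>A. cinner (f a::'a::chilbert) y)"
  by (induct A rule: infinite_finite_induct) (auto simp: cinner_add_left)

lemma Re_cinner_self: "Re (cinner x x) = (norm (x::'a::chilbert))\<^sup>2"
  by (simp add: cinner_self_norm)

lemma cinner_eq_zero_imp_eq_zero: "(\<And>y. cinner x y = 0) \<Longrightarrow> (x::'a::chilbert) = 0"
  by (metis cinner_self_norm norm_eq_zero of_real_eq_0_iff zero_eq_power2)

lemma scaleC_minus_right: "a *\<^sub>C (- x) = - (a *\<^sub>C (x::'a::chilbert))"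
  by (metis scaleC_scaleC mult.commute scaleR_scaleC scaleR_minus1_left)

lemma scaleC_diff_right: "a *\<^sub>C (x - y) = a *\<^sub>C x - a *\<^sub>C (y::'a::chilbert)"
  by (simp only: diff_conv_add_uminus scaleC_add_right scaleC_minus_right)

lemma norm_scaleC: "norm (a *\<^sub>C x) = cmod a * norm (x::'a::chilbert)"
proof -
  have "complex_of_real ((norm (a *\<^sub>C x))\<^sup>2) = complex_of_real ((cmod a * norm x)\<^sup>2)"
    unfolding cinner_self_norm[symmetric] cinner_scaleC_left cinner_scaleC_right
    by (simp add: cinner_self_norm power_mult_distrib complex_norm_square[symmetric] mult_ac)
  hence "(norm (a *\<^sub>C x))\<^sup>2 = (cmod a * norm x)\<^sup>2" using of_real_eq_iff by blast
  thus ?thesis by (simp add: power2_eq_iff_nonneg)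
qed

lemma norm_add_sq: "(norm (x + y))\<^sup>2 = (norm x)\<^sup>2 + (norm y)\<^sup>2 + 2 * Re (cinner x (y::'a::chilbert))"
proof -
  have "(norm (x + y))\<^sup>2 = Re (cinner x x) + Re (cinner y y) + Re (cinner x y) + Re (cinner y x)"
    by (simp add: Re_cinner_self[symmetric] cinner_add_left cinner_add_right)
  also have "Re (cinner y x) = Re (cinner x y)" by (subst cinner_conj) simp
  finally show ?thesis by (simp add: Re_cinner_self)
qed

lemma norm_diff_sq: "(norm (x - y))\<^sup>2 = (norm x)\<^sup>2 + (norm y)\<^sup>2 - 2 * Re (cinner x (y::'a::chilbert))"
  using norm_add_sq[of x "-y"] by (simp add: cinner_minus_right)

lemma parallelogram_law:
  "(norm (x + y))\<^sup>2 + (norm (x - y))\<^sup>2 = 2 * (norm x)\<^sup>2 + 2 * (norm (y::'a::chilbert))\<^sup>2"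
  by (simp add: norm_add_sq norm_diff_sq)

lemma Re_cinner_le: "Re (cinner x y) \<le> norm x * norm (y::'a::chilbert)"
proof -
  define a b where "a = norm x" and "b = norm y"
  have "0 \<le> (norm (b *\<^sub>R x - a *\<^sub>R y))\<^sup>2" by simp
  also have "\<dots> = 2 * (a * b)\<^sup>2 - 2 * (a * b) * Re (cinner x y)"
    unfolding norm_diff_sq
    by (simp add: cinner_scaleR_left cinner_scaleR_right a_def b_def power2_eq_square)
  finally have "(a * b) * Re (cinner x y) \<le> (a * b) * (a * b)" by (simp add: power2_eq_square)
  moreover have "a * b = 0 \<Longrightarrow> x = 0 \<or> y = 0" by (auto simp: a_def b_def)
  ultimately show ?thesis
    by (cases "a * b = 0") (auto simp: a_def b_def mult_le_cancel_left_pos)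
qed

lemma norm_cinner_le: "cmod (cinner x y) \<le> norm x * norm (y::'a::chilbert)"
proof (cases "cinner x y = 0")
  case False
  define c where "c = cnj (cinner x y) / cmod (cinner x y)"
  have "cmod (cinner x y) = Re (cinner x (c *\<^sub>C y))"
    using False by (simp add: c_def cinner_scaleC_right complex_norm_square[symmetric]
        power2_eq_square mult.commute[of "cnj _"])
  also have "\<dots> \<le> norm x * norm (c *\<^sub>C y)" by (rule Re_cinner_le)
  also have "\<dots> = norm x * norm y" using False by (simp add: norm_scaleC c_def norm_divide)
  finally show ?thesis .
qed simp

section \<open>Riesz representation and adjoints\<close>

lemma Cauchy_if_norm_tendsto_Inf:
  fixes A :: "'a::chilbert set"
  assumes midpoint: "\<And>x y. x \<in> A \<Longrightarrow> y \<in> A \<Longrightarrow> (1/2) *\<^sub>R (x + y) \<in> A"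
    and d_le: "\<And>y. y \<in> A \<Longrightarrow> d \<le> norm y" and "0 \<le> d"
    and YA: "\<And>n. Y n \<in> A" and "(\<lambda>n. norm (Y n)) \<longlonglongrightarrow> d"
  shows "Cauchy Y"
proof (rule metric_CauchyI)
  have diff_sq_le: "(norm (x - y))\<^sup>2 \<le> 2 * ((norm x)\<^sup>2 - d\<^sup>2) + 2 * ((norm y)\<^sup>2 - d\<^sup>2)"
    if "x \<in> A" "y \<in> A" for x y
  proof -
    have "2 * d \<le> norm (x + y)" using d_le[OF midpoint[OF that]] by simp
    hence "(2 * d)\<^sup>2 \<le> (norm (x + y))\<^sup>2" using \<open>0 \<le> d\<close> by (intro power_mono) auto
    thus ?thesis using parallelogram_law[of x y] by (simp add: power_mult_distrib)
  qed
  have "(\<lambda>n. (norm (Y n))\<^sup>2 - d\<^sup>2) \<longlonglongrightarrow> d\<^sup>2 - d\<^sup>2"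
    by (intro tendsto_diff tendsto_power tendsto_const) fact
  hence gap: "(\<lambda>n. (norm (Y n))\<^sup>2 - d\<^sup>2) \<longlonglongrightarrow> 0" by simp
  fix e :: real assume "e > 0"
  then obtain N where N: "\<And>n. n \<ge> N \<Longrightarrow> (norm (Y n))\<^sup>2 - d\<^sup>2 < e\<^sup>2 / 4"
    using gap[THEN order_tendstoD(2), of "e\<^sup>2 / 4"] by (auto simp: eventually_sequentially)
  have "dist (Y p) (Y q) < e" if "p \<ge> N" "q \<ge> N" for p q
  proof -
    have "(norm (Y p - Y q))\<^sup>2 < e\<^sup>2"
      using diff_sq_le[OF YA YA, of p q] N[OF that(1)] N[OF that(2)] by argo
    thus ?thesis using \<open>e > 0\<close> by (simp add: dist_norm power_less_imp_less_base)
  qed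
  thus "\<exists>N. \<forall>p\<ge>N. \<forall>q\<ge>N. dist (Y p) (Y q) < e" by blast
qed

lemma min_norm_point:
  fixes A :: "'a::chilbert set"
  assumes "closed A" and "A \<noteq> {}" and midpoint: "\<And>x y. x \<in> A \<Longrightarrow> y \<in> A \<Longrightarrow> (1/2) *\<^sub>R (x + y) \<in> A"
  shows "\<exists>z\<in>A. \<forall>y\<in>A. norm z \<le> norm y"
proof -
  define d where "d = Inf (norm ` A)"
  have bdd: "bdd_below (norm ` A)" by (rule bdd_belowI[of _ 0]) auto
  have d_le: "d \<le> norm y" if "y \<in> A" for y unfolding d_def using bdd that by (simp add: cInf_lower)
  have "0 \<le> d" unfolding d_def using assms(2) by (intro cInf_greatest) auto
  have "\<exists>y\<in>A. norm y < d + 1 / real (Suc n)" for n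
    using cInf_less_iff[of "norm ` A" "d + 1 / real (Suc n)"] bdd assms(2) by (auto simp: d_def)
  then obtain Y where YA: "\<And>n. Y n \<in> A" and Y_lt: "\<And>n. norm (Y n) < d + 1 / real (Suc n)"
    by metis
  have "(\<lambda>n. norm (Y n)) \<longlonglongrightarrow> d"
  proof (rule tendsto_sandwich[OF _ _ tendsto_const])
    show "\<forall>\<^sub>F n in sequentially. d \<le> norm (Y n)" by (intro always_eventually allI d_le YA)
    show "\<forall>\<^sub>F n in sequentially. norm (Y n) \<le> d + 1 / real (Suc n)"
      by (intro always_eventually allI less_imp_le Y_lt)
    have "(\<lambda>n. d + inverse (real (Suc n))) \<longlonglongrightarrow> d + 0"
      by (intro tendsto_add tendsto_const LIMSEQ_inverse_real_of_nat)
    thus "(\<lambda>n. d + 1 / real (Suc n)) \<longlonglongrightarrow> d" by (simp add: inverse_eq_divide)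
  qed
  hence "Cauchy Y" using Cauchy_if_norm_tendsto_Inf[of A d Y] midpoint d_le \<open>0 \<le> d\<close> YA by blast
  then obtain z where "Y \<longlonglongrightarrow> z" using Cauchy_convergent_iff convergent_def by blast
  hence "z \<in> A" using \<open>closed A\<close> YA closed_sequential_limits by blast
  moreover have "norm z = d"
    using tendsto_norm[OF \<open>Y \<longlonglongrightarrow> z\<close>] \<open>(\<lambda>n. norm (Y n)) \<longlonglongrightarrow> d\<close> LIMSEQ_unique by blast
  ultimately show ?thesis using d_le by auto
qed

lemma cinner_eq_0_if_norm_le_norm_add:
  fixes z k :: "'a::chilbert"
  assumes "\<And>t. norm z \<le> norm (z + t *\<^sub>C k)"
  shows "cinner z k = 0"
proof -
  define w where "w = cinner z k"
  define s where "s = 1 / ((norm k)\<^sup>2 + 1)"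
  have "s > 0" and "s * (norm k)\<^sup>2 < 1"
    unfolding s_def by (simp_all add: add_nonneg_pos pos_divide_less_eq)
  \<comment> \<open>Move from \<open>z\<close> a little in the direction that decreases the real part of \<open>\<langle>z, k\<rangle>\<close>.\<close>
  define t where "t = - (of_real s * cnj w)"
  have "(norm z)\<^sup>2 \<le> (norm (z + t *\<^sub>C k))\<^sup>2" using assms by (simp add: power_mono)
  also have "\<dots> = (norm z)\<^sup>2 + (cmod t * norm k)\<^sup>2 + 2 * Re (t * w)"
    by (simp add: norm_add_sq norm_scaleC cinner_scaleC_right w_def)
  also have "Re (t * w) = - s * (cmod w)\<^sup>2"
    using cmod_power2[of w] by (simp add: t_def power2_eq_square algebra_simps)
  also have "cmod t = s * cmod w" using \<open>s > 0\<close> by (simp add: t_def norm_mult)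
  finally have "0 \<le> s * (s * (norm k)\<^sup>2 * (cmod w)\<^sup>2 - 2 * (cmod w)\<^sup>2)"
    by (simp add: power_mult_distrib algebra_simps power2_eq_square)
  hence "2 * (cmod w)\<^sup>2 \<le> s * (norm k)\<^sup>2 * (cmod w)\<^sup>2" using \<open>s > 0\<close> by (simp add: zero_le_mult_iff)
  also have "\<dots> \<le> (cmod w)\<^sup>2" using \<open>s * (norm k)\<^sup>2 < 1\<close> \<open>s > 0\<close> by (intro mult_left_le_one_le) auto
  finally show ?thesis by (simp add: w_def)
qed

lemma riesz_representation:
  fixes \<phi> :: "'a::chilbert \<Rightarrow> complex"
  assumes bl: "bounded_linear \<phi>" and cl: "\<And>c x. \<phi> (c *\<^sub>C x) = c * \<phi> x"
  shows "\<exists>w. \<forall>y. cinner w y = \<phi> y"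
proof (cases "\<forall>x. \<phi> x = 0")
  case True then show ?thesis by (intro exI[of _ 0]) (simp add: cinner_eq_zero_imp_eq_zero)
next
  case False
  then obtain x0 where "\<phi> x0 \<noteq> 0" by auto
  interpret \<phi>: bounded_linear \<phi> by (fact bl)
  define A where "A = {y. \<phi> y = 1}"
  have "(1 / \<phi> x0) *\<^sub>C x0 \<in> A" using \<open>\<phi> x0 \<noteq> 0\<close> by (simp add: A_def cl)
  moreover have "closed A"
    unfolding A_def by (intro closed_Collect_eq continuous_on_const \<phi>.continuous_on continuous_on_id)
  moreover have "(1/2) *\<^sub>R (x + y) \<in> A" if "x \<in> A" "y \<in> A" for x y
    using that by (simp add: A_def \<phi>.scaleR \<phi>.add scaleR_conv_of_real)
  ultimately obtain z where "\<phi> z = 1" and z_min: "\<And>y. \<phi> y = 1 \<Longrightarrow> norm z \<le> norm y"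
    using min_norm_point[of A] by (auto simp: A_def)
  have orth: "cinner z k = 0" if "\<phi> k = 0" for k
    using that \<open>\<phi> z = 1\<close> by (intro cinner_eq_0_if_norm_le_norm_add z_min) (simp add: \<phi>.add cl)
  have "z \<noteq> 0" using \<open>\<phi> z = 1\<close> by auto
  have "cinner ((1 / (norm z)\<^sup>2) *\<^sub>R z) y = \<phi> y" for y
  proof -
    have "cinner z (y - \<phi> y *\<^sub>C z) = 0" using \<open>\<phi> z = 1\<close> by (intro orth) (simp add: \<phi>.diff cl)
    hence "cinner z y = \<phi> y * (norm z)\<^sup>2"
      by (simp add: cinner_diff_right cinner_scaleC_right cinner_self_norm)
    thus ?thesis using \<open>z \<noteq> 0\<close> by (simp add: cinner_scaleR_left)
  qed
  thus ?thesis by blast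
qed

lemma cadjoint_cinner:
  assumes "bounded_clinear A"
  shows "cinner (cadjoint A x) y = cinner x (A y)"
proof -
  interpret A: bounded_linear A using assms by (simp add: bounded_clinear_def)
  have cl: "A (c *\<^sub>C x) = c *\<^sub>C A x" for c x using assms by (simp add: bounded_clinear_def)
  have "bounded_linear (\<lambda>y. cinner x (A y))" for x
  proof (rule bounded_linear_intro[where K = "norm x * onorm A"])
    fix y
    have "norm (cinner x (A y)) \<le> norm x * norm (A y)" by (rule norm_cinner_le)
    also have "\<dots> \<le> norm x * (onorm A * norm y)"
      by (intro mult_left_mono onorm A.bounded_linear_axioms) simp
    finally show "norm (cinner x (A y)) \<le> norm y * (norm x * onorm A)" by (simp add: mult_ac)
  qed (simp_all add: A.add A.scaleR cinner_add_right cinner_scaleR_right scaleR_conv_of_real)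
  hence "\<exists>w. \<forall>y. cinner w y = cinner x (A y)" for x
    by (rule riesz_representation) (simp add: cl cinner_scaleC_right)
  then obtain B where B: "\<And>x y. cinner (B x) y = cinner x (A y)" by metis
  have "cadjoint A = B"
    unfolding cadjoint_def
  proof (rule the_equality)
    fix B' assume B': "\<forall>x y. cinner (B' x) y = cinner x (A y)"
    show "B' = B"
      by (rule ext, rule eq_iff_diff_eq_0[THEN iffD2], rule cinner_eq_zero_imp_eq_zero)
         (simp add: cinner_diff_left B B')
  qed (simp add: B)
  thus ?thesis by (simp add: B)
qed

lemma cinner_cadjoint:
  assumes "bounded_clinear A"
  shows "cinner x (cadjoint A y) = cinner (A x) y"
  by (subst (1 2) cinner_conj) (simp add: cadjoint_cinner[OF assms])

lemma bounded_linear_cadjoint: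
  assumes "bounded_clinear A"
  shows "bounded_linear (cadjoint A)"
proof (rule bounded_linear_intro[where K = "onorm A"])
  note adj = cadjoint_cinner[OF assms]
  have A: "bounded_linear A" using assms by (simp add: bounded_clinear_def)
  fix x z r
  show "cadjoint A (x + z) = cadjoint A x + cadjoint A z"
    by (rule eq_iff_diff_eq_0[THEN iffD2], rule cinner_eq_zero_imp_eq_zero)
       (simp add: cinner_diff_left cinner_add_left adj)
  show "cadjoint A (r *\<^sub>R x) = r *\<^sub>R cadjoint A x"
    by (rule eq_iff_diff_eq_0[THEN iffD2], rule cinner_eq_zero_imp_eq_zero)
       (simp add: cinner_diff_left cinner_scaleR_left adj)
  define b where "b = cadjoint A x"
  have "(norm b)\<^sup>2 = Re (cinner x (A b))" by (simp add: b_def adj Re_cinner_self[symmetric])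
  also have "\<dots> \<le> norm x * norm (A b)" by (rule Re_cinner_le)
  also have "\<dots> \<le> norm x * (onorm A * norm b)" by (intro mult_left_mono onorm A) simp
  finally have "norm b * norm b \<le> norm b * (norm x * onorm A)" by (simp add: power2_eq_square mult_ac)
  thus "norm (cadjoint A x) \<le> norm x * onorm A"
    by (cases "norm b = 0") (auto simp: b_def onorm_pos_le[OF A] mult_le_cancel_left_pos)
qed

section \<open>Positive operators\<close>

lemma cinner_self_quadratic_form_ge:
  fixes Q :: "'a::chilbert \<Rightarrow> 'a"
  assumes "bounded_linear Q" and "\<And>h. norm h = 1 \<Longrightarrow> c \<le> Re (cinner h (Q h))"
  shows "c * (norm x)\<^sup>2 \<le> Re (cinner x (Q x))"
proof (cases "x = 0")
  case True
  thus ?thesis by simp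
next
  case False
  interpret Q: bounded_linear Q by (fact assms(1))
  define u where "u = (1 / norm x) *\<^sub>R x"
  have "Re (cinner (norm x *\<^sub>R u) (Q (norm x *\<^sub>R u))) = (norm x)\<^sup>2 * Re (cinner u (Q u))"
    by (simp add: Q.scaleR cinner_scaleR_left cinner_scaleR_right power2_eq_square)
  moreover have "norm x *\<^sub>R u = x" using False by (simp add: u_def)
  ultimately have "Re (cinner x (Q x)) = (norm x)\<^sup>2 * Re (cinner u (Q u))" by simp
  moreover have "c \<le> Re (cinner u (Q u))" using False by (intro assms(2)) (simp add: u_def)
  ultimately show ?thesis by (metis mult.commute mult_left_mono zero_le_power2)
qed

text \<open>Cauchy--Schwarz for the positive semidefinite form \<open>\<langle>x, (Q - c) y\<rangle>\<close>, tested against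
  \<open>u - (Q u - c u)/K\<close>.\<close>
lemma norm_sq_le_quadratic_form_gap:
  fixes Q :: "'a::chilbert \<Rightarrow> 'a"
  assumes Q: "bounded_linear Q" and sa: "\<And>x y. cinner x (Q y) = cinner (Q x) y"
    and lower: "\<And>x. c * (norm x)\<^sup>2 \<le> Re (cinner x (Q x))" and "0 \<le> c"
    and K: "\<And>y. norm (Q y) \<le> norm y * K" and "0 < K"
  shows "(norm (Q u - c *\<^sub>R u))\<^sup>2 \<le> K * (Re (cinner u (Q u)) - c * (norm u)\<^sup>2)"
proof -
  interpret Q: bounded_linear Q by (fact Q)
  define b where "b = (\<lambda>x y. Re (cinner x (Q y)) - c * Re (cinner x y))"
  define v where "v = Q u - c *\<^sub>R u"
  have b_nonneg: "0 \<le> b x x" for x using lower[of x] by (simp add: b_def Re_cinner_self)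
  have "b u v = Re (cinner (Q u) v) - c * Re (cinner u v)" by (simp add: b_def sa)
  also have "\<dots> = (norm v)\<^sup>2"
    by (simp add: v_def cinner_diff_left cinner_scaleR_left Re_cinner_self[symmetric])
  moreover
  have "b v u = (norm v)\<^sup>2"
    by (simp add: b_def v_def cinner_diff_right cinner_scaleR_right Re_cinner_self[symmetric])
  moreover have "b v v \<le> K * (norm v)\<^sup>2"
  proof -
    have "b v v \<le> Re (cinner v (Q v))" using \<open>0 \<le> c\<close> by (simp add: b_def Re_cinner_self)
    also have "\<dots> \<le> norm v * (norm v * K)" by (rule order_trans[OF Re_cinner_le]) (simp add: K mult_left_mono)
    finally show ?thesis by (simp add: power2_eq_square mult_ac)
  qed
  moreover have "b (u - t *\<^sub>R v) (u - t *\<^sub>R v) = b u u - t * b u v - t * b v u + t\<^sup>2 * b v v" for t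
    by (simp add: b_def Q.diff Q.scaleR cinner_diff_left cinner_diff_right
        cinner_scaleR_left cinner_scaleR_right algebra_simps power2_eq_square)
  ultimately have "0 \<le> b u u - 2 / K * (norm v)\<^sup>2 + (1/K)\<^sup>2 * b v v"
    using b_nonneg[of "u - (1/K) *\<^sub>R v"] by simp
  also have "(1/K)\<^sup>2 * b v v \<le> (1/K)\<^sup>2 * (K * (norm v)\<^sup>2)"
    using \<open>b v v \<le> K * (norm v)\<^sup>2\<close> by (rule mult_left_mono) simp
  also have "(1/K)\<^sup>2 * (K * (norm v)\<^sup>2) = (norm v)\<^sup>2 / K" using \<open>0 < K\<close> by (simp add: power2_eq_square)
  finally have "(norm v)\<^sup>2 \<le> K * b u u" using \<open>0 < K\<close> by (simp add: field_simps)
  thus ?thesis by (simp add: b_def v_def Re_cinner_self)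
qed

lemma INF_norm_le_INF_quadratic_form:
  fixes Q :: "'a::chilbert \<Rightarrow> 'a"
  assumes Q: "bounded_linear Q" and sa: "\<And>x y. cinner x (Q y) = cinner (Q x) y"
    and pos: "\<And>x. 0 \<le> Re (cinner x (Q x))"
  shows "(INF h\<in>{h. norm h = 1}. norm (Q h)) \<le> (INF h\<in>{h. norm h = 1}. Re (cinner h (Q h)))"
proof (cases "{h::'a. norm h = 1} = {}")
  case False
  define S where "S = {h::'a. norm h = 1}"
  define c where "c = (INF h\<in>S. Re (cinner h (Q h)))"
  have bdd: "bdd_below ((\<lambda>h. Re (cinner h (Q h))) ` S)" using pos by (auto intro: bdd_belowI[of _ 0])
  have "0 \<le> c" unfolding c_def using False pos by (intro cINF_greatest) (auto simp: S_def)
  have lower: "c * (norm x)\<^sup>2 \<le> Re (cinner x (Q x))" for x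
    using Q by (rule cinner_self_quadratic_form_ge) (use bdd in \<open>auto simp: c_def S_def intro: cINF_lower\<close>)
  obtain K where K: "\<And>y. norm (Q y) \<le> norm y * K" and "0 < K"
    using bounded_linear.pos_bounded[OF Q] by blast
  have "(INF h\<in>S. norm (Q h)) \<le> c + e" if "0 < e" for e
  proof -
    have "(INF h\<in>S. Re (cinner h (Q h))) < c + e\<^sup>2 / K"
      using \<open>0 < e\<close> \<open>0 < K\<close> by (simp add: c_def)
    then obtain u where "u \<in> S" and u: "Re (cinner u (Q u)) < c + e\<^sup>2 / K"
      using cINF_less_iff[OF False[folded S_def] bdd] by blast
    have "(norm (Q u - c *\<^sub>R u))\<^sup>2 \<le> K * (Re (cinner u (Q u)) - c)"
      using norm_sq_le_quadratic_form_gap[OF Q sa lower \<open>0 \<le> c\<close> K \<open>0 < K\<close>, of u] \<open>u \<in> S\<close>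
      by (simp add: S_def)
    also have "\<dots> < e\<^sup>2" using u \<open>0 < K\<close> by (simp add: field_simps)
    finally have "norm (Q u - c *\<^sub>R u) < e" using \<open>0 < e\<close> by (simp add: power_less_imp_less_base)
    moreover have "norm (Q u) \<le> norm (Q u - c *\<^sub>R u) + c"
      using norm_triangle_ineq[of "Q u - c *\<^sub>R u" "c *\<^sub>R u"] \<open>u \<in> S\<close> \<open>0 \<le> c\<close> by (simp add: S_def)
    ultimately have "norm (Q u) \<le> c + e" by simp
    thus ?thesis using \<open>u \<in> S\<close> by (intro cINF_lower2[where x = u]) (auto intro: bdd_belowI[of _ 0])
  qed
  thus ?thesis unfolding S_def c_def by (rule field_le_epsilon)
qed simp

lemma bounded_clinear_id: "bounded_clinear (id :: 'a::chilbert \<Rightarrow> 'a)"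
  by (simp add: bounded_clinear_def id_def bounded_linear_ident)

lemma bounded_clinear_comp:
  "bounded_clinear A \<Longrightarrow> bounded_clinear B \<Longrightarrow> bounded_clinear (A \<circ> B)"
  by (simp add: bounded_clinear_def bounded_linear_compose comp_def)

definition approx_eigen :: "(nat \<Rightarrow> 'a::chilbert) \<Rightarrow> ('a \<Rightarrow> 'a) \<Rightarrow> complex \<Rightarrow> bool" where
  "approx_eigen hs A \<mu> \<longleftrightarrow> (\<lambda>n. A (hs n) - \<mu> *\<^sub>C hs n) \<longlonglongrightarrow> 0"

lemma approx_eigen_id: "approx_eigen hs id 1"
  by (simp add: approx_eigen_def scaleC_one)

lemma approx_eigen_comp:
  assumes "bounded_clinear A" and "approx_eigen hs A a" and "approx_eigen hs B b"
  shows "approx_eigen hs (A \<circ> B) (a * b)"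
proof -
  interpret A: bounded_linear A using assms(1) by (simp add: bounded_clinear_def)
  have "A (c *\<^sub>C x) = c *\<^sub>C A x" for c x using assms(1) by (simp add: bounded_clinear_def)
  hence "A (B (hs n)) - (a * b) *\<^sub>C hs n
      = A (B (hs n) - b *\<^sub>C hs n) + b *\<^sub>C (A (hs n) - a *\<^sub>C hs n)" for n
    by (simp add: A.diff scaleC_diff_right scaleC_scaleC mult.commute)
  moreover have "(\<lambda>n. A (B (hs n) - b *\<^sub>C hs n) + b *\<^sub>C (A (hs n) - a *\<^sub>C hs n)) \<longlonglongrightarrow> A 0 + 0"
  proof (rule tendsto_add)
    show "(\<lambda>n. A (B (hs n) - b *\<^sub>C hs n)) \<longlonglongrightarrow> A 0"
      using assms(3) unfolding approx_eigen_def by (rule A.tendsto)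
    have "(\<lambda>n. norm (A (hs n) - a *\<^sub>C hs n)) \<longlonglongrightarrow> 0"
      using assms(2) unfolding approx_eigen_def by (rule tendsto_norm_zero)
    hence "(\<lambda>n. norm (b *\<^sub>C (A (hs n) - a *\<^sub>C hs n))) \<longlonglongrightarrow> 0"
      unfolding norm_scaleC by (rule tendsto_mult_right_zero)
    thus "(\<lambda>n. b *\<^sub>C (A (hs n) - a *\<^sub>C hs n)) \<longlonglongrightarrow> 0"
      by (rule tendsto_norm_zero_cancel)
  qed
  ultimately show ?thesis unfolding approx_eigen_def comp_def by simp
qed

lemma norm_tendsto_if_approx_eigen:
  assumes "approx_eigen hs A \<mu>" and "\<And>n. norm (hs n) = 1"
  shows "(\<lambda>n. norm (A (hs n))) \<longlonglongrightarrow> cmod \<mu>"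
proof -
  have "(\<lambda>n. norm (A (hs n) - \<mu> *\<^sub>C hs n)) \<longlonglongrightarrow> 0"
    using assms(1) unfolding approx_eigen_def by (rule tendsto_norm_zero)
  moreover have "norm (norm (A (hs n)) - cmod \<mu>) \<le> norm (A (hs n) - \<mu> *\<^sub>C hs n)" for n
    using norm_triangle_ineq3[of "A (hs n)" "\<mu> *\<^sub>C hs n"] by (simp add: norm_scaleC assms(2))
  ultimately have "(\<lambda>n. norm (A (hs n)) - cmod \<mu>) \<longlonglongrightarrow> 0"
    using Lim_null_comparison always_eventually by (metis (no_types, lifting))
  thus ?thesis by (simp add: LIM_zero_iff)
qed

lemma foldr_comp_eq: "foldr (\<lambda>i f. F i \<circ> f) xs g = foldr (\<lambda>i f. F i \<circ> f) xs id \<circ> g"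
  by (induction xs) auto

lemma Tpow_Suc: "Tpow (Suc m) T \<alpha> = Tpow m T \<alpha> \<circ> (T m ^^ \<alpha> m)"
  unfolding Tpow_def by (simp, subst foldr_comp_eq) simp

lemma Tpow_induct:
  assumes id: "P id 1" and comp: "\<And>A a B b. P A a \<Longrightarrow> P B b \<Longrightarrow> P (A \<circ> B) (a * b)"
    and gen: "\<And>i. i < m \<Longrightarrow> P (T i) (z i)"
  shows "P (Tpow m T \<alpha>) (\<Prod>i<m. z i ^ \<alpha> i)"
  using gen
proof (induction m)
  case 0
  thus ?case using id by (simp add: Tpow_def id_def)
next
  case (Suc m)
  have Tm: "P (T m) (z m)" using Suc.prems by simp
  have "P (T m ^^ j) (z m ^ j)" for j
  proof (induction j)
    case 0
    thus ?case using id by (simp only: funpow.simps(1) power_0)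
  next
    case (Suc j)
    thus ?case using comp[OF Tm] by (simp only: funpow.simps power_Suc)
  qed
  hence "P (Tpow m T \<alpha> \<circ> (T m ^^ \<alpha> m)) ((\<Prod>i<m. z i ^ \<alpha> i) * z m ^ \<alpha> m)"
    using Suc by (intro comp) simp_all
  thus ?case by (simp only: Tpow_Suc prod.lessThan_Suc)
qed

lemma bounded_clinear_Tpow:
  assumes "\<forall>i<m. bounded_clinear (T i)"
  shows "bounded_clinear (Tpow m T \<alpha>)"
  using Tpow_induct[where P = "\<lambda>A _. bounded_clinear A" and z = "\<lambda>_. 1"] assms
    bounded_clinear_id bounded_clinear_comp by blast

lemma approx_eigen_Tpow:
  assumes "\<forall>i<m. bounded_clinear (T i)" and "\<forall>i<m. approx_eigen hs (T i) (z i)"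
  shows "approx_eigen hs (Tpow m T \<alpha>) (\<Prod>i<m. z i ^ \<alpha> i)"
proof (rule conjunct2, rule Tpow_induct[where P = "\<lambda>A a. bounded_clinear A \<and> approx_eigen hs A a"])
  show "bounded_clinear id \<and> approx_eigen hs id 1" by (simp add: bounded_clinear_id approx_eigen_id)
  fix A a B b
  assume "bounded_clinear A \<and> approx_eigen hs A a" "bounded_clinear B \<and> approx_eigen hs B b"
  thus "bounded_clinear (A \<circ> B) \<and> approx_eigen hs (A \<circ> B) (a * b)"
    by (simp add: bounded_clinear_comp approx_eigen_comp)
qed (use assms in blast)

section \<open>The multinomial expansion\<close>

definition multinomial_coeff :: "nat \<Rightarrow> nat \<Rightarrow> (nat \<Rightarrow> nat) \<Rightarrow> real" where
  "multinomial_coeff m k \<alpha> = fact k / (\<Prod>i<m. fact (\<alpha> i))"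

lemma multinomial_coeff_nonneg: "0 \<le> multinomial_coeff m k \<alpha>"
  unfolding multinomial_coeff_def by (intro divide_nonneg_nonneg prod_nonneg) auto

lemma finite_multi_indices: "finite (multi_indices m k)"
proof (rule finite_subset)
  show "multi_indices m k \<subseteq> (\<lambda>f i. if i < m then f i else 0) ` (\<Pi>\<^sub>E i\<in>{..<m}. {..k})"
  proof
    fix \<alpha> assume \<alpha>: "\<alpha> \<in> multi_indices m k"
    have "\<alpha> i \<le> k" if "i < m" for i
      using \<alpha> member_le_sum[of i "{..<m}" \<alpha>] that by (auto simp: multi_indices_def)
    moreover have "\<alpha> = (\<lambda>i. if i < m then restrict \<alpha> {..<m} i else 0)"
      using \<alpha> by (auto simp: multi_indices_def fun_eq_iff)
    ultimately show "\<alpha> \<in> (\<lambda>f i. if i < m then f i else 0) ` (\<Pi>\<^sub>E i\<in>{..<m}. {..k})"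
      by (intro image_eqI[where x = "restrict \<alpha> {..<m}"]) auto
  qed
qed (intro finite_imageI finite_PiE; simp)

lemma multinomial_expansion:
  "(\<Sum>\<alpha>\<in>multi_indices m k. multinomial_coeff m k \<alpha> * (\<Prod>i<m. x i ^ \<alpha> i))
     = (\<Sum>i<m. x i :: real) ^ k"
proof (induction m arbitrary: k)
  case 0
  have "multi_indices 0 k = (if k = 0 then {\<lambda>_. 0} else {})" by (auto simp: multi_indices_def)
  thus ?case by (simp add: multinomial_coeff_def)
next
  case (Suc m)
  define c where "c = (\<lambda>k \<beta>. multinomial_coeff m k \<beta> * (\<Prod>i<m. x i ^ \<beta> i))"
  have "(\<Sum>i<Suc m. x i) ^ k = (x m + (\<Sum>i<m. x i)) ^ k" by (simp add: add.commute)
  also have "\<dots> = (\<Sum>j\<le>k. of_nat (k choose j) * x m ^ j * (\<Sum>i<m. x i) ^ (k - j))"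
    by (rule binomial_ring)
  also have "\<dots> = (\<Sum>j\<le>k. \<Sum>\<beta>\<in>multi_indices m (k - j). of_nat (k choose j) * x m ^ j * c (k - j) \<beta>)"
    by (simp add: Suc.IH[symmetric] c_def sum_distrib_left)
  also have "\<dots> = (\<Sum>(j, \<beta>)\<in>Sigma {..k} (\<lambda>j. multi_indices m (k - j)).
                    of_nat (k choose j) * x m ^ j * c (k - j) \<beta>)"
    by (subst sum.Sigma) (auto simp: finite_multi_indices)
  \<comment> \<open>Split off the last coordinate: \<open>\<alpha> \<leftrightarrow> (\<alpha> m, \<alpha>(m := 0))\<close>.\<close>
  also have "\<dots> = (\<Sum>\<alpha>\<in>multi_indices (Suc m) k. multinomial_coeff (Suc m) k \<alpha> * (\<Prod>i<Suc m. x i ^ \<alpha> i))"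
  proof (rule sum.reindex_bij_witness[where j = "\<lambda>(j, \<beta>). \<beta>(m := j)" and i = "\<lambda>\<alpha>. (\<alpha> m, \<alpha>(m := 0))"])
    fix \<alpha> assume \<alpha>: "\<alpha> \<in> multi_indices (Suc m) k"
    have "(\<Sum>i<m. (\<alpha>(m := 0)) i) = (\<Sum>i<m. \<alpha> i)" by (rule sum.cong) auto
    thus "(\<alpha> m, \<alpha>(m := 0)) \<in> Sigma {..k} (\<lambda>j. multi_indices m (k - j))"
      using \<alpha> by (auto simp: multi_indices_def)
  next
    fix p assume "p \<in> Sigma {..k} (\<lambda>j. multi_indices m (k - j))"
    then obtain j \<beta> where p: "p = (j, \<beta>)" and j: "j \<le> k" and \<beta>: "\<beta> \<in> multi_indices m (k - j)"
      by auto
    have "\<beta> m = 0" using \<beta> by (simp add: multi_indices_def)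
    thus "(\<lambda>\<alpha>. (\<alpha> m, \<alpha>(m := 0))) ((\<lambda>(j, \<beta>). \<beta>(m := j)) p) = p" by (auto simp: p fun_eq_iff)
    have "(\<Sum>i<m. (\<beta>(m := j)) i) = (\<Sum>i<m. \<beta> i)" by (rule sum.cong) auto
    thus "(\<lambda>(j, \<beta>). \<beta>(m := j)) p \<in> multi_indices (Suc m) k"
      using \<beta> j by (auto simp: multi_indices_def p)
    have p1: "(\<Prod>i<m. fact ((\<beta>(m := j)) i) :: real) = (\<Prod>i<m. fact (\<beta> i))" by (rule prod.cong) auto
    have p2: "(\<Prod>i<m. x i ^ (\<beta>(m := j)) i) = (\<Prod>i<m. x i ^ \<beta> i)" by (rule prod.cong) auto
    have "(\<Prod>i<m. fact (\<beta> i) :: real) > 0" by (intro prod_pos) auto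
    thus "(\<lambda>\<alpha>. multinomial_coeff (Suc m) k \<alpha> * (\<Prod>i<Suc m. x i ^ \<alpha> i)) ((\<lambda>(j, \<beta>). \<beta>(m := j)) p)
      = (case p of (j, \<beta>) \<Rightarrow> of_nat (k choose j) * x m ^ j * c (k - j) \<beta>)"
      by (simp add: p c_def multinomial_coeff_def p1 p2 binomial_fact[OF j] field_simps)
  qed (auto simp: fun_eq_iff)
  finally show ?case ..
qed

section \<open>The operators \<open>Q\<^sub>T\<^sup>k(I)\<close>\<close>

lemma INF_powr_le:
  fixes g :: "'b \<Rightarrow> real"
  assumes "U \<noteq> {}" and "\<And>x. x \<in> U \<Longrightarrow> 0 \<le> g x" and "(INF x\<in>U. g x) \<le> r ^ n"
    and "0 \<le> r" and "0 < n"
  shows "(INF x\<in>U. g x powr (1 / real n)) \<le> r"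
proof (rule dense_ge)
  fix y assume "r < y"
  hence "(INF x\<in>U. g x) < y ^ n" using assms(3-5) by (smt (verit) power_strict_mono)
  moreover have "bdd_below (g ` U)" using assms(2) by (auto intro: bdd_belowI[of _ 0])
  ultimately obtain u where "u \<in> U" and "g u < y ^ n" using cINF_less_iff[OF assms(1)] by blast
  hence "g u powr (1 / real n) \<le> (y ^ n) powr (1 / real n)"
    using assms(2,5) by (intro powr_mono2) auto
  also have "\<dots> = y" using \<open>r < y\<close> assms(4,5) by (simp add: powr_realpow[symmetric] powr_powr)
  finally show "(INF x\<in>U. g x powr (1 / real n)) \<le> y"
    using \<open>u \<in> U\<close> by (intro cINF_lower2[where x = u]) (auto intro: bdd_belowI[of _ 0])
qed

lemma QTk_eq: "QTk m T k h = (\<Sum>\<alpha>\<in>multi_indices m k.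
    multinomial_coeff m k \<alpha> *\<^sub>R cadjoint (Tpow m T \<alpha>) (Tpow m T \<alpha> h))"
  by (simp add: QTk_def multinomial_coeff_def)

lemma
  fixes T :: "nat \<Rightarrow> 'a::chilbert \<Rightarrow> 'a"
  assumes "\<forall>i<m. bounded_clinear (T i)"
  shows cinner_QTk_right: "cinner h (QTk m T k g) = (\<Sum>\<alpha>\<in>multi_indices m k.
            of_real (multinomial_coeff m k \<alpha>) * cinner (Tpow m T \<alpha> h) (Tpow m T \<alpha> g))"
    and cinner_QTk_left: "cinner (QTk m T k h) g = (\<Sum>\<alpha>\<in>multi_indices m k.
            of_real (multinomial_coeff m k \<alpha>) * cinner (Tpow m T \<alpha> h) (Tpow m T \<alpha> g))"
  using bounded_clinear_Tpow[OF assms]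
  by (simp_all add: QTk_eq cinner_sum_left cinner_sum_right cinner_scaleR_left
      cinner_scaleR_right cinner_cadjoint cadjoint_cinner)

lemma bounded_linear_QTk:
  assumes "\<forall>i<m. bounded_clinear (T i)"
  shows "bounded_linear (QTk m T k)"
proof -
  have "bounded_linear (\<lambda>h. cadjoint (Tpow m T \<alpha>) (Tpow m T \<alpha> h))" for \<alpha>
    using bounded_clinear_Tpow[of m T \<alpha>] assms
    by (intro bounded_linear_compose[OF bounded_linear_cadjoint]) (auto simp: bounded_clinear_def)
  thus ?thesis
    unfolding QTk_eq[abs_def]
    by (intro bounded_linear_sum bounded_linear_compose[OF bounded_linear_scaleR_right])
qed

lemma Re_cinner_QTk:
  assumes "\<forall>i<m. bounded_clinear (T i)"
  shows "Re (cinner h (QTk m T k h))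
    = (\<Sum>\<alpha>\<in>multi_indices m k. multinomial_coeff m k \<alpha> * (norm (Tpow m T \<alpha> h))\<^sup>2)"
  by (simp add: cinner_QTk_right[OF assms] Re_sum cinner_self_norm)

lemma quadratic_form_QTk_tendsto:
  assumes "\<forall>i<m. bounded_clinear (T i)" and "\<forall>i<m. approx_eigen hs (T i) (z i)"
    and "\<And>n. norm (hs n) = 1"
  shows "(\<lambda>n. Re (cinner (hs n) (QTk m T k (hs n)))) \<longlonglongrightarrow> l2norm m z ^ (2 * k)"
proof -
  have "(\<lambda>n. Re (cinner (hs n) (QTk m T k (hs n))))
      \<longlonglongrightarrow> (\<Sum>\<alpha>\<in>multi_indices m k. multinomial_coeff m k \<alpha> * (cmod (\<Prod>i<m. z i ^ \<alpha> i))\<^sup>2)"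
    unfolding Re_cinner_QTk[OF assms(1)]
    using norm_tendsto_if_approx_eigen[OF approx_eigen_Tpow[OF assms(1,2)] assms(3)]
    by (intro tendsto_intros)
  also have "(\<Sum>\<alpha>\<in>multi_indices m k. multinomial_coeff m k \<alpha> * (cmod (\<Prod>i<m. z i ^ \<alpha> i))\<^sup>2)
      = (\<Sum>\<alpha>\<in>multi_indices m k. multinomial_coeff m k \<alpha> * (\<Prod>i<m. ((cmod (z i))\<^sup>2) ^ \<alpha> i))"
    by (simp add: prod_norm[symmetric] norm_power prod_power_distrib power_mult[symmetric] mult.commute)
  also have "\<dots> = (\<Sum>i<m. (cmod (z i))\<^sup>2) ^ k" by (rule multinomial_expansion)
  also have "\<dots> = l2norm m z ^ (2 * k)" by (simp add: l2norm_def power_mult sum_nonneg)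
  finally show ?thesis .
qed

lemma INF_QTk_root_le_l2norm:
  assumes "\<forall>i<m. bounded_clinear (T i)" and "\<forall>i<m. approx_eigen hs (T i) (z i)"
    and "\<And>n. norm (hs n) = 1" and "1 \<le> k"
  shows "(INF h\<in>{h. norm h = 1}. norm (QTk m T k h) powr (1 / (2 * real k))) \<le> l2norm m z"
proof -
  define S where "S = {h::'a. norm h = 1}"
  have pos: "0 \<le> Re (cinner h (QTk m T k h))" for h
    unfolding Re_cinner_QTk[OF assms(1)]
    by (intro sum_nonneg mult_nonneg_nonneg multinomial_coeff_nonneg zero_le_power2)
  have "(INF h\<in>S. Re (cinner h (QTk m T k h))) \<le> l2norm m z ^ (2 * k)"
    using quadratic_form_QTk_tendsto[OF assms(1-3)]
  proof (rule LIMSEQ_le_const, intro exI allI impI)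
    show "(INF h\<in>S. Re (cinner h (QTk m T k h))) \<le> Re (cinner (hs n) (QTk m T k (hs n)))" for n
      using assms(3) pos by (intro cINF_lower) (auto simp: S_def intro: bdd_belowI[of _ 0])
  qed
  moreover have "(INF h\<in>S. norm (QTk m T k h)) \<le> (INF h\<in>S. Re (cinner h (QTk m T k h)))"
    unfolding S_def using bounded_linear_QTk[OF assms(1)] cinner_QTk_right[OF assms(1)]
      cinner_QTk_left[OF assms(1)] pos
    by (intro INF_norm_le_INF_quadratic_form) auto
  ultimately have "(INF h\<in>S. norm (QTk m T k h)) \<le> l2norm m z ^ (2 * k)" by linarith
  hence "(INF h\<in>S. norm (QTk m T k h) powr (1 / real (2 * k))) \<le> l2norm m z"
    using assms(3,4) by (intro INF_powr_le) (auto simp: S_def l2norm_def sum_nonneg)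
  thus ?thesis by (simp add: S_def)
qed

theorem lemma3p6:
  fixes T :: "nat \<Rightarrow> 'a::chilbert \<Rightarrow> 'a" and m :: nat
  assumes "\<forall>i<m. bounded_clinear (T i)"
    and "\<forall>i<m. \<forall>j<m. T i \<circ> T j = T j \<circ> T i"
  shows "joint_ap_spectrum m T \<inter> {z\<in>cvec m. l2norm m z < m_infty m T} = {}"
proof (rule equals0I)
  fix z assume "z \<in> joint_ap_spectrum m T \<inter> {z\<in>cvec m. l2norm m z < m_infty m T}"
  then obtain hs :: "nat \<Rightarrow> 'a" where unit: "\<And>n. norm (hs n) = 1"
    and lim: "(\<lambda>n. \<Sum>j<m. norm (T j (hs n) - z j *\<^sub>C hs n)) \<longlonglongrightarrow> 0"
    and "l2norm m z < m_infty m T"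
    by (auto simp: joint_ap_spectrum_def)
  have "approx_eigen hs (T i) (z i)" if "i < m" for i
  proof -
    have "norm (T i (hs n) - z i *\<^sub>C hs n) \<le> (\<Sum>j<m. norm (T j (hs n) - z j *\<^sub>C hs n))" for n
      using that by (intro member_le_sum[where f = "\<lambda>j. norm (T j (hs n) - z j *\<^sub>C hs n)"]) auto
    thus ?thesis
      unfolding approx_eigen_def by (rule Lim_null_comparison[OF always_eventually lim, OF allI])
  qed
  hence "m_infty m T \<le> l2norm m z"
    unfolding m_infty_def using assms(1) unit by (intro cSUP_least INF_QTk_root_le_l2norm) auto
  with \<open>l2norm m z < m_infty m T\<close> show False by simp
qed

end
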